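(* Let $n$, $k$, $t$ be positive integers with $k\geq t+1$ and $n\geq 2k$, and let $V$ be an $n$-dimensional vector space over $\mathbb{F}_q$. Suppose $\mathcal{F}\subseteq{V\brack k}$ is almost $t$-intersecting and $\mathcal{B}\subseteq\mathcal{F}$. If $A$ is a $t$-cover of $\mathcal{F}\setminus\mathcal{B}$ with $\dim(A)<\tau_t(\mathcal{F})\leq k$, then there exists a subspace $A_u$ of $V$ with $A\subseteq A_u$, $\tau_t(\mathcal{F})\leq\dim(A_u)$ and $$|\mathcal{B}_A|\leq{k-t+1\brack 1}^{\dim(A_u)-\dim(A)}|\mathcal{B}_{A_u}|+\sum_{i=0}^{\tau_t(\mathcal{F})-\dim(A)-1}{k-t+1\brack 1}^{i}.$$
   Context: $q$ is a prime power; ${W\brack k}$ is the set of $k$-dimensional subspaces of $W$ and ${m\brack r}$ the Gaussian binomial coefficient $\prod_{i=0}^{r-1}\frac{q^{m-i}-1}{q^{r-i}-1}$. A family $\mathcal{F}\subseteq{V\brack k}$ is almost $t$-intersecting if for each $F\in\mathcal{F}$ there is at most one $F'\in\mathcal{F}$ with $\dim(F\cap F')<t$. A subspace $W$ is a $t$-cover of a family $\mathcal{A}$ if $\dim(W\cap F)\geq t$ for all $F\in\mathcal{A}$; $\tau_t(\mathcal{F})$ is the minimum dimension of a $t$-cover of $\mathcal{F}$. For a family $\mathcal{B}$ and subspace $A$, $\mathcal{B}_A=\{F\in\mathcal{B}: A\subseteq F\}$. *)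

theory Defs
  imports "HOL-Analysis.Analysis"
begin

text \<open>Ambient space V = F_q^n, modelled as the type 'a ^ 'n with 'a a finite field
  (so q = CARD('a) is a prime power) and n = CARD('n).\<close>

definition gauss_binom :: "nat \<Rightarrow> nat \<Rightarrow> nat \<Rightarrow> real" where
  "gauss_binom q m r = (\<Prod>i<r. (real q ^ (m - i) - 1) / (real q ^ (r - i) - 1))"

definition ksubspaces :: "nat \<Rightarrow> ('a::field ^ 'n) set set" where
  "ksubspaces k = {W. vec.subspace W \<and> vec.dim W = k}"

definition almost_t_intersecting :: "nat \<Rightarrow> ('a::field ^ 'n) set set \<Rightarrow> bool" where
  "almost_t_intersecting t \<F> \<longleftrightarrow>
     (\<forall>F\<in>\<F>. card {F'\<in>\<F>. vec.dim (F \<inter> F') < t} \<le> 1)"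

definition t_cover :: "nat \<Rightarrow> ('a::field ^ 'n) set \<Rightarrow> ('a ^ 'n) set set \<Rightarrow> bool" where
  "t_cover t W \<A> \<longleftrightarrow> vec.subspace W \<and> (\<forall>F\<in>\<A>. vec.dim (W \<inter> F) \<ge> t)"

definition tau :: "nat \<Rightarrow> ('a::field ^ 'n) set set \<Rightarrow> nat" where
  "tau t \<F> = (LEAST d. \<exists>W. t_cover t W \<F> \<and> vec.dim W = d)"

definition containing :: "('a ^ 'n) set set \<Rightarrow> ('a ^ 'n) set \<Rightarrow> ('a ^ 'n) set set" where
  "containing \<B> A = {F\<in>\<B>. A \<subseteq> F}"

end

theory Submission
  imports Defs
begin

text \<open>Since \<open>dim A < \<tau>\<^sub>t(\<F>)\<close>, some \<open>F\<^sub>0 \<in> \<F>\<close> meets \<open>A\<close> in dimension less than \<open>t\<close>,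
  so \<open>F\<^sub>0\<close> contains a subspace \<open>W\<close> of dimension \<open>k - t + 1\<close> with \<open>W \<inter> A = 0\<close>. By almost
  \<open>t\<close>-intersection at most one member \<open>F\<close> of \<open>\<B>\<^sub>A\<close> has \<open>dim (F\<^sub>0 \<inter> F) < t\<close>; every other one
  meets \<open>F\<^sub>0\<close> in dimension at least \<open>t\<close>, hence meets \<open>W\<close> in some \<open>v \<noteq> 0\<close>, and so contains
  \<open>A + \<langle>v\<rangle>\<close>. There are at most \<open>[k-t+1, 1]\<^sub>q\<close> such extensions of \<open>A\<close>, each again a \<open>t\<close>-cover of
  \<open>\<F> - \<B>\<close> of dimension \<open>dim A + 1\<close>, so \<open>|\<B>\<^sub>A| \<le> 1 + [k-t+1, 1]\<^sub>q max\<^sub>U |\<B>\<^sub>U|\<close>. Iterating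
  until the dimension reaches \<open>\<tau>\<^sub>t(\<F>)\<close> gives the bound.\<close>

lemma card_span_independent:
  fixes D :: "('a::{field,finite}^'n) set"
  assumes ind: "vec.independent D"
  shows "card (vec.span D) = CARD('a) ^ card D"
proof -
  have fin: "finite D" using ind vec.finiteI_independent by blast
  let ?f = "\<lambda>u. \<Sum>v\<in>D. u v *s v"
  have span_eq: "vec.span D = ?f ` (D \<rightarrow>\<^sub>E (UNIV::'a set))"
    unfolding vec.span_finite[OF fin]
  proof (intro equalityI subsetI)
    fix x assume "x \<in> range ?f"
    then obtain u where x: "x = ?f u" by blast
    have "?f u = ?f (restrict u D)" by (rule sum.cong) auto
    then show "x \<in> ?f ` (D \<rightarrow>\<^sub>E UNIV)" using x
      by (intro image_eqI[where x="restrict u D"]) auto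
  qed auto
  have "inj_on ?f (D \<rightarrow>\<^sub>E (UNIV::'a set))"
  proof (rule inj_onI)
    fix u u' assume u: "u \<in> D \<rightarrow>\<^sub>E UNIV" and u': "u' \<in> D \<rightarrow>\<^sub>E UNIV" and eq: "?f u = ?f u'"
    have "(\<Sum>v\<in>D. (u v - u' v) *s v) = 0"
      using eq by (simp add: vec.scale_left_diff_distrib sum_subtractf)
    then have "\<forall>v\<in>D. u v - u' v = 0"
      using ind unfolding vec.independent_explicit
      by (elim conjE allE[where x="\<lambda>v. u v - u' v"]) simp
    then show "u = u'" using u u' by (intro PiE_ext) auto
  qed
  then show ?thesis unfolding span_eq by (simp add: card_image card_PiE[OF fin])
qed

lemma card_subspace:
  fixes W :: "('a::{field,finite}^'n) set"
  assumes "vec.subspace W"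
  shows "card W = CARD('a) ^ vec.dim W"
proof -
  obtain B where "B \<subseteq> W" "vec.independent B" "W \<subseteq> vec.span B" "card B = vec.dim W"
    using vec.basis_exists by blast
  moreover from \<open>B \<subseteq> W\<close> have "vec.span B \<subseteq> W"
    using assms by (rule vec.span_minimal)
  ultimately have "W = vec.span B" by blast
  with \<open>vec.independent B\<close> \<open>card B = vec.dim W\<close> show ?thesis
    by (simp add: card_span_independent)
qed

lemma two_le_card_field: "2 \<le> CARD('a::{field,finite})"
proof -
  have "card {0::'a, 1} \<le> CARD('a)" by (rule card_mono) simp_all
  then show ?thesis by simp
qed

lemma mult_card_image_le_card:
  assumes "finite S" and "\<And>x. x \<in> S \<Longrightarrow> m \<le> card {y\<in>S. f y = f x}"
  shows "m * card (f ` S) \<le> card S"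
proof -
  have "S = (\<Union>z\<in>f ` S. {y\<in>S. f y = z})" by auto
  then have "card S = (\<Sum>z\<in>f ` S. card {y\<in>S. f y = z})"
    using assms(1) by (subst card_UN_disjoint[symmetric]) auto
  also have "\<dots> \<ge> (\<Sum>z\<in>f ` S. m)"
    by (rule sum_mono) (auto intro: assms(2))
  finally show ?thesis by (simp add: mult.commute)
qed

lemma span_insert_scale:
  fixes x :: "'a::field^'n"
  assumes "c \<noteq> 0"
  shows "vec.span (insert (c *s x) A) = vec.span (insert x A)"
proof
  show "vec.span (insert (c *s x) A) \<subseteq> vec.span (insert x A)"
    by (rule vec.span_minimal) (auto intro: vec.span_scale vec.span_base)
  have "x = inverse c *s (c *s x)" using assms by simp
  then have "x \<in> vec.span (insert (c *s x) A)"
    by (metis insertI1 vec.span_base vec.span_scale)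
  then show "vec.span (insert x A) \<subseteq> vec.span (insert (c *s x) A)"
    by (intro vec.span_minimal) (auto intro: vec.span_base)
qed

text \<open>Each extension arises from at least \<open>q - 1\<close> vectors of \<open>W - {0}\<close>, namely the nonzero
  multiples of any one of them.\<close>
lemma card_span_insert_image_le:
  fixes W A :: "('a::{field,finite}^'n) set"
  assumes W: "vec.subspace W"
  shows "real (card ((\<lambda>v. vec.span (insert v A)) ` (W - {0})))
           \<le> (real (card W) - 1) / (real CARD('a) - 1)"
proof -
  let ?\<phi> = "\<lambda>v. vec.span (insert v A)"
  have "(CARD('a) - 1) * card (?\<phi> ` (W - {0})) \<le> card (W - {0})"
  proof (rule mult_card_image_le_card)
    fix x assume x: "x \<in> W - {0}"
    have "inj_on (\<lambda>c::'a. c *s x) (UNIV - {0})"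
      using x by (intro inj_onI) simp
    then have "CARD('a) - 1 = card ((\<lambda>c::'a. c *s x) ` (UNIV - {0}))"
      by (simp add: card_image)
    also have "\<dots> \<le> card {y \<in> W - {0}. ?\<phi> y = ?\<phi> x}"
      using x W by (intro card_mono) (auto intro: vec.subspace_scale simp: span_insert_scale)
    finally show "CARD('a) - 1 \<le> card {y \<in> W - {0}. ?\<phi> y = ?\<phi> x}" .
  qed simp
  moreover have "card (W - {0}) = card W - 1"
    using vec.subspace_0[OF W] by (simp add: card_Diff_singleton)
  moreover have "1 \<le> card W"
    using vec.subspace_0[OF W] by (auto simp: Suc_le_eq card_gt_0_iff)
  ultimately have "real ((CARD('a) - 1) * card (?\<phi> ` (W - {0}))) \<le> real (card W - 1)"
    by (simp only: of_nat_le_iff)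
  with \<open>1 \<le> card W\<close> two_le_card_field[where 'a='a]
  have "(real CARD('a) - 1) * real (card (?\<phi> ` (W - {0}))) \<le> real (card W) - 1"
    by (simp add: of_nat_diff)
  then show ?thesis
    using two_le_card_field[where 'a='a] by (simp add: pos_le_divide_eq mult.commute)
qed

lemma span_Int_span_independent_disjoint:
  fixes D B :: "('a::field^'n) set"
  assumes ind: "vec.independent (D \<union> B)" and disj: "D \<inter> B = {}"
  shows "vec.span D \<inter> vec.span B \<subseteq> {0}"
proof -
  have "finite (D \<union> B)" using ind vec.finiteI_independent by blast
  then have fin: "finite D" "finite B" by auto
  have indD: "vec.independent D" and indB: "vec.independent B"
    using ind vec.independent_mono by blast+
  have "vec.dim {x + y |x y. x \<in> vec.span D \<and> y \<in> vec.span B} + vec.dim (vec.span D \<inter> vec.span B)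
      = vec.dim (vec.span D) + vec.dim (vec.span B)"
    by (rule vec.dim_sums_Int) simp_all
  moreover have "vec.dim {x + y |x y. x \<in> vec.span D \<and> y \<in> vec.span B} = card D + card B"
    using vec.dim_span_eq_card_independent[OF ind] card_Un_disjoint[OF fin disj]
    by (simp add: vec.span_Un[symmetric])
  ultimately have "vec.dim (vec.span D \<inter> vec.span B) = 0"
    by (simp add: vec.dim_eq_card_independent[OF indD] vec.dim_eq_card_independent[OF indB])
  then show ?thesis by simp
qed

lemma subspace_avoiding_exists:
  fixes A F :: "('a::field^'n) set"
  assumes A: "vec.subspace A" and F: "vec.subspace F"
    and d: "d + vec.dim (A \<inter> F) \<le> vec.dim F"
  obtains W where "vec.subspace W" "W \<subseteq> F" "vec.dim W = d" "W \<inter> A \<subseteq> {0}"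
proof -
  obtain B where B: "B \<subseteq> A \<inter> F" "vec.independent B" "A \<inter> F \<subseteq> vec.span B"
    "card B = vec.dim (A \<inter> F)"
    using vec.basis_exists by blast
  obtain C where C: "B \<subseteq> C" "C \<subseteq> F" "vec.independent C" "F \<subseteq> vec.span C"
    using vec.maximal_independent_subset_extend[of B F] B by blast
  have "finite C" using C(3) vec.finiteI_independent by blast
  moreover have "card C = vec.dim F" using vec.basis_card_eq_dim[OF C(2) C(4) C(3)] .
  ultimately have "d \<le> card (C - B)"
    using C(1) B(4) d by (simp add: card_Diff_subset finite_subset)
  then obtain D where D: "D \<subseteq> C - B" "card D = d"
    by (meson obtain_subset_with_card_n)
  have indD: "vec.independent D" using D(1) C(3) vec.independent_mono by blast
  show ?thesis
  proof
    show "vec.subspace (vec.span D)" by simp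
    show "vec.span D \<subseteq> F" using D(1) C(2) F by (intro vec.span_minimal) auto
    show "vec.dim (vec.span D) = d" using vec.dim_span_eq_card_independent[OF indD] D(2) by simp
    have "vec.span D \<inter> A \<subseteq> vec.span D \<inter> vec.span B"
      using \<open>vec.span D \<subseteq> F\<close> B(3) by blast
    also have "\<dots> \<subseteq> {0}"
      using D(1) C(1) vec.independent_mono[OF C(3)]
      by (intro span_Int_span_independent_disjoint) blast+
    finally show "vec.span D \<inter> A \<subseteq> {0}" .
  qed
qed

lemma subspace_Int_nonzero:
  fixes X W F :: "('a::field^'n) set"
  assumes X: "vec.subspace X" and W: "vec.subspace W" and F: "vec.subspace F"
    and "X \<subseteq> F" "W \<subseteq> F" and dim: "vec.dim F < vec.dim X + vec.dim W"
  obtains v where "v \<in> X" "v \<in> W" "v \<noteq> 0"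
proof -
  have "{x + y |x y. x \<in> X \<and> y \<in> W} \<subseteq> F"
    using assms by (auto intro: vec.subspace_add)
  then have "vec.dim {x + y |x y. x \<in> X \<and> y \<in> W} \<le> vec.dim F"
    by (rule vec.dim_subset)
  with vec.dim_sums_Int[OF X W] dim have "vec.dim (X \<inter> W) \<noteq> 0" by linarith
  then show ?thesis using that by auto
qed

lemma t_cover_superspace:
  assumes "t_cover t A \<G>" "A \<subseteq> U" "vec.subspace U"
  shows "t_cover t U \<G>"
  using assms vec.dim_subset[of "A \<inter> _" "U \<inter> _"] unfolding t_cover_def
  by (meson Int_mono order_trans subset_refl)

lemma containing_subset_extensions:
  fixes \<F> \<B> :: "('a::field^'n) set set" and A W F0 :: "('a^'n) set"
  assumes \<F>: "\<F> \<subseteq> ksubspaces k" and \<B>: "\<B> \<subseteq> \<F>" and F0: "F0 \<in> \<F>"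
    and W: "vec.subspace W" "W \<subseteq> F0" and dimW: "k < t + vec.dim W"
  shows "containing \<B> A \<subseteq>
    {F\<in>\<F>. vec.dim (F0 \<inter> F) < t} \<union> (\<Union>v\<in>W - {0}. containing \<B> (vec.span (insert v A)))"
proof
  fix F assume "F \<in> containing \<B> A"
  then have F: "F \<in> \<F>" "F \<in> \<B>" "A \<subseteq> F" using \<B> unfolding containing_def by auto
  have subsp: "vec.subspace F" "vec.subspace F0" and "vec.dim F0 = k"
    using F(1) F0 \<F> unfolding ksubspaces_def by auto
  show "F \<in> {F\<in>\<F>. vec.dim (F0 \<inter> F) < t} \<union>
    (\<Union>v\<in>W - {0}. containing \<B> (vec.span (insert v A)))"
  proof (cases "vec.dim (F0 \<inter> F) < t")
    case False
    then have "vec.dim F0 < vec.dim (F0 \<inter> F) + vec.dim W"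
      using dimW \<open>vec.dim F0 = k\<close> by linarith
    then obtain v where v: "v \<in> F0 \<inter> F" "v \<in> W" "v \<noteq> 0"
      using subspace_Int_nonzero[OF vec.subspace_inter[OF subsp(2,1)] W(1) subsp(2) Int_lower1 W(2)]
      by blast
    then have "vec.span (insert v A) \<subseteq> F"
      using F(3) subsp(1) by (intro vec.span_minimal) auto
    with v F show ?thesis unfolding containing_def by auto
  qed (use F in auto)
qed

lemma gauss_binom_1: "gauss_binom q m 1 = (real q ^ m - 1) / (real q - 1)"
  by (simp add: gauss_binom_def)

lemma card_containing_le_sum_extensions:
  fixes \<F> \<B> :: "('a::{field,finite}^'n) set set" and A F0 :: "('a^'n) set"
  assumes \<F>: "\<F> \<subseteq> ksubspaces k" and ai: "almost_t_intersecting t \<F>" and \<B>: "\<B> \<subseteq> \<F>"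
    and "t \<le> k" and A: "vec.subspace A" and F0: "F0 \<in> \<F>" and "vec.dim (A \<inter> F0) < t"
  obtains \<U> where "finite \<U>" "\<U> \<noteq> {}"
    "\<And>U. U \<in> \<U> \<Longrightarrow> vec.subspace U \<and> A \<subseteq> U \<and> vec.dim U = Suc (vec.dim A)"
    "real (card \<U>) \<le> gauss_binom CARD('a) (k - t + 1) 1"
    "card (containing \<B> A) \<le> 1 + (\<Sum>U\<in>\<U>. card (containing \<B> U))"
proof -
  have F0s: "vec.subspace F0" "vec.dim F0 = k" using F0 \<F> unfolding ksubspaces_def by auto
  have "k - t + 1 + vec.dim (A \<inter> F0) \<le> vec.dim F0" using F0s(2) assms(4,7) by linarith
  then obtain W where W: "vec.subspace W" "W \<subseteq> F0" "vec.dim W = k - t + 1" "W \<inter> A \<subseteq> {0}"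
    using subspace_avoiding_exists[OF A F0s(1)] by blast
  define \<U> where "\<U> = (\<lambda>v. vec.span (insert v A)) ` (W - {0})"
  have "finite \<U>" by (simp add: \<U>_def)
  show ?thesis
  proof (rule that)
    show "finite \<U>" by fact
    have "\<not> W \<subseteq> {0}" using W(3) vec.dim_eq_0[of W] by simp
    then show "\<U> \<noteq> {}" by (auto simp: \<U>_def)
  next
    fix U assume "U \<in> \<U>"
    then obtain v where v: "v \<in> W" "v \<noteq> 0" "U = vec.span (insert v A)" by (auto simp: \<U>_def)
    then have "v \<notin> A" using W(4) by blast
    then have "v \<notin> vec.span A" using A by (metis vec.span_eq_iff)
    then show "vec.subspace U \<and> A \<subseteq> U \<and> vec.dim U = Suc (vec.dim A)"
      using v(3) by (auto simp: vec.dim_insert vec.span_base)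
  next
    show "real (card \<U>) \<le> gauss_binom CARD('a) (k - t + 1) 1"
      unfolding gauss_binom_1 \<U>_def
      using card_span_insert_image_le[OF W(1), of A] card_subspace[OF W(1)] W(3) by simp
  next
    define E where "E = {F\<in>\<F>. vec.dim (F0 \<inter> F) < t}"
    have "card E \<le> 1" using ai F0 unfolding almost_t_intersecting_def E_def by blast
    have "containing \<B> A \<subseteq> E \<union> (\<Union>U\<in>\<U>. containing \<B> U)"
      using containing_subset_extensions[OF \<F> \<B> F0 W(1,2)] W(3) assms(4)
      unfolding E_def \<U>_def by auto
    then have "card (containing \<B> A) \<le> card (E \<union> (\<Union>U\<in>\<U>. containing \<B> U))"
      by (rule card_mono[rotated]) simp
    also have "\<dots> \<le> card E + (\<Sum>U\<in>\<U>. card (containing \<B> U))"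
      using card_Un_le card_UN_le[of \<U> "containing \<B>"] \<open>finite \<U>\<close>
      by (meson add_left_mono order_trans)
    finally show "card (containing \<B> A) \<le> 1 + (\<Sum>U\<in>\<U>. card (containing \<B> U))"
      using \<open>card E \<le> 1\<close> by linarith
  qed
qed

lemma sum_le_card_mult_max_bound:
  fixes y c :: "'b \<Rightarrow> real"
  assumes "finite \<U>" "\<U> \<noteq> {}" and y: "\<And>U. U \<in> \<U> \<Longrightarrow> y U \<le> a * c U + s" and "0 \<le> a"
  obtains U0 where "U0 \<in> \<U>" "(\<Sum>U\<in>\<U>. y U) \<le> real (card \<U>) * (a * c U0 + s)"
proof -
  have "Max (c ` \<U>) \<in> c ` \<U>" using assms(1,2) by simp
  then obtain U0 where U0: "U0 \<in> \<U>" "\<And>U. U \<in> \<U> \<Longrightarrow> c U \<le> c U0"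
    using Max_ge[of "c ` \<U>"] assms(1) by fastforce
  have "y U \<le> a * c U0 + s" if "U \<in> \<U>" for U
    using y[OF that] mult_left_mono[OF U0(2)[OF that] \<open>0 \<le> a\<close>] by linarith
  then show ?thesis using that[OF U0(1)] sum_bounded_above by blast
qed

lemma card_containing_le_geometric_sum:
  fixes \<F> \<B> :: "('a::{field,finite}^'n) set set" and A :: "('a^'n) set" and k t T :: nat
  defines "g \<equiv> gauss_binom CARD('a) (k - t + 1) 1"
  assumes \<F>: "\<F> \<subseteq> ksubspaces k" and ai: "almost_t_intersecting t \<F>" and \<B>: "\<B> \<subseteq> \<F>"
    and "t \<le> k" and T: "\<And>W. t_cover t W \<F> \<Longrightarrow> T \<le> vec.dim W"
    and cover: "t_cover t A (\<F> - \<B>)" and "vec.dim A \<le> T"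
  shows "\<exists>Au. vec.subspace Au \<and> A \<subseteq> Au \<and> vec.dim Au = T \<and>
    real (card (containing \<B> A))
      \<le> g ^ (T - vec.dim A) * real (card (containing \<B> Au)) + (\<Sum>i<T - vec.dim A. g ^ i)"
  using cover \<open>vec.dim A \<le> T\<close>
proof (induction m \<equiv> "T - vec.dim A" arbitrary: A)
  case 0
  then show ?case unfolding t_cover_def by auto
next
  case (Suc m)
  have A: "vec.subspace A" using Suc.prems(1) unfolding t_cover_def by simp
  have "\<not> t_cover t A \<F>" using T Suc.hyps(2) by fastforce
  then obtain F0 where "F0 \<in> \<F>" "vec.dim (A \<inter> F0) < t"
    using A unfolding t_cover_def by (auto simp: not_le)
  then obtain \<U> where \<U>: "finite \<U>" "\<U> \<noteq> {}"
      "\<And>U. U \<in> \<U> \<Longrightarrow> vec.subspace U \<and> A \<subseteq> U \<and> vec.dim U = Suc (vec.dim A)"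
      "real (card \<U>) \<le> g" "card (containing \<B> A) \<le> 1 + (\<Sum>U\<in>\<U>. card (containing \<B> U))"
    using card_containing_le_sum_extensions[OF \<F> ai \<B> \<open>t \<le> k\<close> A] unfolding g_def by blast
  define S where "S = (\<Sum>i<m. g ^ i)"
  have "\<exists>Au. vec.subspace Au \<and> U \<subseteq> Au \<and> vec.dim Au = T \<and>
      real (card (containing \<B> U)) \<le> g ^ m * real (card (containing \<B> Au)) + S"
    if "U \<in> \<U>" for U
  proof -
    have "m = T - vec.dim U" "t_cover t U (\<F> - \<B>)" "vec.dim U \<le> T"
      using \<U>(3)[OF that] Suc.hyps(2) t_cover_superspace[OF Suc.prems(1)] by auto
    then show ?thesis using Suc.hyps(1)[of U] unfolding S_def by simp
  qed
  then obtain au where au: "\<And>U. U \<in> \<U> \<Longrightarrow> vec.subspace (au U) \<and> U \<subseteq> au U \<and> vec.dim (au U) = T \<and>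
      real (card (containing \<B> U)) \<le> g ^ m * real (card (containing \<B> (au U))) + S"
    by metis
  define c where "c U = real (card (containing \<B> (au U)))" for U
  have "0 \<le> g" using \<U>(4) by (meson of_nat_0_le_iff order_trans)
  obtain U0 where U0: "U0 \<in> \<U>"
    and sum_le: "(\<Sum>U\<in>\<U>. real (card (containing \<B> U))) \<le> real (card \<U>) * (g ^ m * c U0 + S)"
    using sum_le_card_mult_max_bound[OF \<U>(1,2), of "\<lambda>U. real (card (containing \<B> U))" "g ^ m" c S]
      au \<open>0 \<le> g\<close> unfolding c_def by auto
  have "0 \<le> S" unfolding S_def using \<open>0 \<le> g\<close> by (simp add: sum_nonneg)
  have "real (card (containing \<B> A)) \<le> real (1 + (\<Sum>U\<in>\<U>. card (containing \<B> U)))"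
    using \<U>(5) by (simp only: of_nat_le_iff)
  also have "\<dots> \<le> 1 + real (card \<U>) * (g ^ m * c U0 + S)"
    using sum_le by simp
  also have "\<dots> \<le> 1 + g * (g ^ m * c U0 + S)"
    using \<U>(4) \<open>0 \<le> g\<close> \<open>0 \<le> S\<close> by (simp add: mult_right_mono c_def)
  also have "\<dots> = g ^ Suc m * c U0 + (\<Sum>i<Suc m. g ^ i)"
    unfolding S_def by (subst sum.lessThan_Suc_shift) (simp add: sum_distrib_left algebra_simps)
  finally show ?case
    using au[OF U0(1)] \<U>(3)[OF U0(1)] Suc.hyps(2) unfolding c_def by (intro exI[of _ "au U0"]) auto
qed

theorem proposition3p3:
  fixes \<F> \<B> :: "('a::{field,finite} ^ 'n) set set"
    and A :: "('a ^ 'n) set"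
    and n k t :: nat
  assumes "n = CARD('n)"
    and "t \<ge> 1" and "k \<ge> 1"
    and "k \<ge> t + 1" and "n \<ge> 2 * k"
    and "\<F> \<subseteq> ksubspaces k"
    and "almost_t_intersecting t \<F>"
    and "\<B> \<subseteq> \<F>"
    and "t_cover t A (\<F> - \<B>)"
    and "vec.dim A < tau t \<F>" and "tau t \<F> \<le> k"
  shows "\<exists>Au. vec.subspace Au \<and> A \<subseteq> Au \<and> tau t \<F> \<le> vec.dim Au \<and>
     real (card (containing \<B> A)) \<le>
       gauss_binom CARD('a) (k - t + 1) 1 ^ (vec.dim Au - vec.dim A) * real (card (containing \<B> Au))
       + (\<Sum>i=0..tau t \<F> - vec.dim A - 1. gauss_binom CARD('a) (k - t + 1) 1 ^ i)"
proof -
  have tau_le: "tau t \<F> \<le> vec.dim W" if "t_cover t W \<F>" for W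
    unfolding tau_def using that by (intro Least_le) blast
  have "{0..tau t \<F> - vec.dim A - 1} = {..<tau t \<F> - vec.dim A}"
    using assms(10) by auto
  with card_containing_le_geometric_sum[OF assms(6-8) _ tau_le assms(9)] assms(4,10)
  show ?thesis by force
qed

end
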